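(* Let $g_1,g_2$ be monic divisors of $x^m-1$ over $\mathbb{F}_q$, $v_1\in\mathcal{R}$, and let $\mathcal{D}_1$ be the QC code of length $2m$ generated by $(g_1,v_1g_1)$ and $(0,g_2)$. Then $\mathcal{D}_1$ is symplectic dual-containing iff $g_2\mid g_2^{\perp}(\overline{v_1}-v_1)$ and $g_2\mid g_1^{\perp}$.
   Context: $\mathcal{R}=\mathbb{F}_q[x]/(x^m-1)$, elements identified with representatives of degree $<m$; $[k]=(k_0,\dots,k_{m-1})$; $\overline{k}(x)=k(x^{-1})\bmod(x^m-1)$; $f^*(x)=x^{\deg f}f(1/x)$; for $k\in\mathcal{R}$, $f=\frac{x^m-1}{\gcd(k,x^m-1)}$, $k^{\perp}=f(0)^{-1}f^*$. "$g\mid a$" for $g\mid x^m-1$ means $g$ divides the representative of $a$. The QC code generated by $(u_{i1},u_{i2})$, $i=1,2$, is $\{([r_1u_{11}+r_2u_{21}],[r_1u_{12}+r_2u_{22}]):r_i\in\mathcal{R}\}\subseteq\mathbb{F}_q^{2m}$. Symplectic inner product on $\mathbb{F}_q^{2m}$: $\sum_{i=1}^m(u_iv_{m+i}-u_{m+i}v_i)$; dual-containing means $\mathcal{D}_1^{\perp_S}\subseteq\mathcal{D}_1$. *)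

theory Defs
  imports "HOL-Computational_Algebra.Computational_Algebra"
begin

text \<open>The ring R = F_q[x]/(x^m - 1): elements are polynomials, reduced modulo x^m - 1.\<close>

definition xm1 :: "nat \<Rightarrow> 'a::field poly" where
  "xm1 m = monom 1 m - 1"

definition rmod :: "nat \<Rightarrow> 'a::field poly \<Rightarrow> 'a poly" where
  "rmod m p = p mod xm1 m"

text \<open>bar k (x) = k(x^{-1}) mod (x^m - 1).\<close>
definition rbar :: "nat \<Rightarrow> 'a::field poly \<Rightarrow> 'a poly" where
  "rbar m k = rmod m (\<Sum>i\<le>degree k. monom (coeff k i) ((m - i mod m) mod m))"

text \<open>f^* = x^(deg f) f(1/x) is the library's reflect_poly;
  k^perp = f(0)^{-1} f^* with f = (x^m-1)/gcd(k, x^m-1).\<close>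
definition rperp :: "nat \<Rightarrow> 'a::field_gcd poly \<Rightarrow> 'a poly" where
  "rperp m k = (let f = xm1 m div gcd k (xm1 m) in smult (inverse (coeff f 0)) (reflect_poly f))"

text \<open>Vector [a] of a representative: coefficients 0..m-1; codewords of length 2m are
  functions nat => 'a, zero outside {0..<2m}.\<close>
definition codeword :: "nat \<Rightarrow> 'a::zero poly \<Rightarrow> 'a poly \<Rightarrow> nat \<Rightarrow> 'a" where
  "codeword m a b = (\<lambda>i. if i < m then coeff a i else if i < 2*m then coeff b (i - m) else 0)"

definition qc_code2 :: "nat \<Rightarrow> 'a::field poly \<Rightarrow> 'a poly \<Rightarrow> 'a poly \<Rightarrow> 'a poly \<Rightarrow> (nat \<Rightarrow> 'a) set" where
  "qc_code2 m u11 u12 u21 u22 =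
     {codeword m (rmod m (r1 * u11 + r2 * u21)) (rmod m (r1 * u12 + r2 * u22)) | r1 r2. True}"

definition symp :: "nat \<Rightarrow> (nat \<Rightarrow> 'a::comm_ring) \<Rightarrow> (nat \<Rightarrow> 'a) \<Rightarrow> 'a" where
  "symp m u v = (\<Sum>i<m. u i * v (m + i) - u (m + i) * v i)"

definition symp_dual :: "nat \<Rightarrow> (nat \<Rightarrow> 'a::comm_ring) set \<Rightarrow> (nat \<Rightarrow> 'a) set" where
  "symp_dual m D = {v. (\<forall>i\<ge>2*m. v i = 0) \<and> (\<forall>u\<in>D. symp m u v = 0)}"

definition symp_dual_containing :: "nat \<Rightarrow> (nat \<Rightarrow> 'a::comm_ring) set \<Rightarrow> bool" where
  "symp_dual_containing m D \<longleftrightarrow> symp_dual m D \<subseteq> D"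

end

theory Submission
  imports Defs
begin

text \<open>
  Work with representatives modulo N = x^m - 1 and let bar b = b(x^(m-1)) be the conjugation
  x \<mapsto> x^(-1) of R. The standard inner product of [a] and [b] is the constant coefficient
  of a * bar b in R, so the symplectic product of the codeword of (r1, r2) with [a|b] is the
  constant coefficient of r1 g1 (bar b - v1 bar a) - r2 g2 bar a. Since r1 and r2 range over R
  and this trace form is nondegenerate, [a|b] lies in the symplectic dual iff N divides both
  g1 (bar b - v1 bar a) and g2 bar a, i.e. iff h2^* divides a and h1^* divides b - bar v1 a,
  where h_i = N / g_i and h^* is the reciprocal polynomial (h divides bar a iff h^* divides a).
  Membership in the code itself means g1 | a and g2 | b - v1 a. Testing dual containment on the
  dual vectors [0|h1^*] and [h2^*|bar v1 h2^*] yields the two divisibility conditions, and they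
  suffice because g2 | h1^* forces g1 | h2^*. Finally g^\<bottom> is a unit multiple of (N / g)^*.
\<close>

section \<open>Arithmetic modulo x^m - 1\<close>

lemma xm1_nonzero: "m > 0 \<Longrightarrow> xm1 m \<noteq> (0::'a::field poly)"
proof
  assume "m > 0" "xm1 m = (0::'a poly)"
  then have "coeff (xm1 m) m = (0::'a)" by simp
  with \<open>m > 0\<close> show False unfolding xm1_def by simp
qed

lemma degree_xm1: "m > 0 \<Longrightarrow> degree (xm1 m :: 'a::field poly) = m"
proof (rule antisym)
  assume "m > 0"
  show "degree (xm1 m :: 'a poly) \<le> m" unfolding xm1_def
    by (metis degree_diff_le degree_monom_le degree_1 le0)
  show "m \<le> degree (xm1 m :: 'a poly)"
    by (rule le_degree) (use \<open>m > 0\<close> in \<open>simp add: xm1_def\<close>)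
qed

lemma coeff_0_xm1: "m > 0 \<Longrightarrow> coeff (xm1 m :: 'a::field poly) 0 = -1"
  unfolding xm1_def by simp

lemma degree_mod_xm1_less: "m > 0 \<Longrightarrow> degree (p mod xm1 m :: 'a::field poly) < m"
  using degree_mod_less[OF xm1_nonzero, of m p] degree_xm1[of m, where 'a='a] by force

lemma mod_xm1_eq_self: "degree p < m \<Longrightarrow> p mod xm1 m = (p :: 'a::field poly)"
  by (rule mod_poly_less) (simp add: degree_xm1)

lemma monom_1_m_mod_xm1: "monom 1 m mod xm1 m = (1::'a::field poly) mod xm1 m"
proof -
  have "monom 1 m = xm1 m + (1::'a poly)" by (simp add: xm1_def)
  then show ?thesis by (metis mod_add_self1)
qed

lemma monom_1_m_mult_mod_xm1: "(monom 1 m * p) mod xm1 m = (p::'a::field poly) mod xm1 m"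
  by (metis mod_mult_cong monom_1_m_mod_xm1 mult_1)

lemma monom_mod_xm1: "monom c k mod xm1 m = (monom c (k mod m) :: 'a::field poly) mod xm1 m"
proof -
  have split: "monom c k = monom c (k mod m) * (monom 1 m) ^ (k div m)"
    by (simp add: mult_monom monom_power)
  have "(monom 1 m) ^ (k div m) mod xm1 m = (1::'a poly) mod xm1 m"
    by (metis power_mod monom_1_m_mod_xm1 power_one)
  then show ?thesis unfolding split by (metis mod_mult_right_eq mult.right_neutral)
qed

lemma monom_mod_xm1_cong:
  "k mod m = k' mod m \<Longrightarrow> monom c k mod xm1 m = (monom c k' :: 'a::field poly) mod xm1 m"
  by (metis monom_mod_xm1)

lemma xm1_dvd_monom_mult_minus_1: "xm1 m dvd (monom 1 (m * k) - (1::'a::field poly))"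
  using monom_mod_xm1[of 1 "m * k" m] by (simp add: mod_eq_dvd_iff flip: one_poly_eq_simps(1))

lemma reflect_xm1: "m > 0 \<Longrightarrow> reflect_poly (xm1 m :: 'a::field poly) = - xm1 m"
proof -
  assume m: "m > 0"
  have "xm1 m = pCons (-1) (monom (1::'a) (m - 1))"
    using m unfolding xm1_def by (cases m) (auto simp: monom_Suc one_pCons)
  then have "reflect_poly (xm1 m) = reflect_poly (monom (1::'a) (m - 1)) + monom (-1) m"
    using m by (simp add: reflect_poly_pCons' degree_monom_eq)
  also have "reflect_poly (monom (1::'a) (m - 1)) = 1"
    by (intro poly_eqI) (auto simp: coeff_reflect_poly degree_monom_eq)
  finally show ?thesis by (simp add: xm1_def flip: minus_monom)
qed

lemma reflect_dvd_xm1: "m > 0 \<Longrightarrow> h dvd xm1 m \<Longrightarrow> reflect_poly h dvd (xm1 m :: 'a::field poly)"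
proof -
  assume m: "m > 0" and "h dvd xm1 m"
  then obtain k where "xm1 m = h * k" by blast
  then have "- xm1 m = reflect_poly h * reflect_poly k" by (metis reflect_xm1[OF m] reflect_poly_mult)
  then show ?thesis by (metis dvd_minus_iff dvd_triv_left)
qed

lemma dvd_cong_mod:
  "d dvd z \<Longrightarrow> p mod z = q mod z \<Longrightarrow> d dvd p \<longleftrightarrow> d dvd (q::'a::field poly)"
  by (metis dvd_mod_iff)

lemma sum_mod_poly: "sum f A mod z = (\<Sum>i\<in>A. f i mod (z::'a::field poly))"
  by (induction A rule: infinite_finite_induct) (auto simp: poly_mod_add_left)

lemma sum_mod_cong:
  "(\<And>i. i \<in> A \<Longrightarrow> f i mod z = g i mod z) \<Longrightarrow> sum f A mod z = sum g A mod (z::'a::field poly)"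
  by (simp add: sum_mod_poly)

section \<open>Conjugation x \<mapsto> x^(-1)\<close>

text \<open>The unreduced conjugation; since x^(m-1) x = x^m = 1 in R, the substitution
  x \<mapsto> x^(m-1) realizes x \<mapsto> x^(-1) while remaining a ring homomorphism of polynomials.\<close>
definition bar_poly :: "nat \<Rightarrow> 'a::field poly \<Rightarrow> 'a poly" where
  "bar_poly m p = pcompose p (monom 1 (m - 1))"

lemma pcompose_monom_left: "pcompose (monom c k) q = smult c (q ^ k)"
  by (induction k) (simp_all add: monom_0 monom_Suc pcompose_pCons)

lemma pcompose_mod_cong:
  "q mod z = q' mod z \<Longrightarrow> pcompose p q mod z = pcompose p q' mod (z::'a::field poly)"
proof (induction p)
  case (pCons a p)
  then have "(q * pcompose p q) mod z = (q' * pcompose p q') mod z"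
    by (metis mod_mult_cong)
  then show ?case by (simp add: pcompose_pCons poly_mod_add_left)
qed simp

lemma bar_poly_monom: "bar_poly m (monom c k) = monom c ((m - 1) * k)"
  by (simp add: bar_poly_def pcompose_monom_left monom_power mult.commute smult_monom)

lemma bar_poly_mult: "bar_poly m (p * q) = bar_poly m p * bar_poly m q"
  by (simp add: bar_poly_def pcompose_mult)

lemma bar_poly_diff: "bar_poly m (p - q) = bar_poly m p - bar_poly m q"
  by (simp add: bar_poly_def pcompose_diff)

lemma bar_poly_sum: "bar_poly m (\<Sum>i\<in>A. f i) = (\<Sum>i\<in>A. bar_poly m (f i))"
  by (simp add: bar_poly_def pcompose_sum)

lemma bar_poly_as_sum_monoms:
  "bar_poly m p = (\<Sum>i\<le>degree p. monom (coeff p i) ((m - 1) * i))"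
  by (subst poly_as_sum_of_monoms[symmetric, of p]) (simp only: bar_poly_sum bar_poly_monom)

lemma xm1_dvd_bar_poly_xm1: "xm1 m dvd bar_poly m (xm1 m :: 'a::field poly)"
proof -
  have "bar_poly m (xm1 m :: 'a poly) = monom 1 (m * (m - 1)) - 1"
    by (simp add: xm1_def bar_poly_diff bar_poly_monom mult.commute)
      (simp add: bar_poly_def pcompose_1)
  then show ?thesis using xm1_dvd_monom_mult_minus_1 by metis
qed

lemma bar_poly_mod_cong:
  "p mod xm1 m = q mod xm1 m \<Longrightarrow> bar_poly m p mod xm1 m = bar_poly m (q :: 'a::field poly) mod xm1 m"
proof -
  assume "p mod xm1 m = q mod xm1 m"
  then obtain t where "p - q = xm1 m * t" by (auto simp: mod_eq_dvd_iff)
  then have "bar_poly m p - bar_poly m q = bar_poly m (xm1 m) * bar_poly m t"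
    by (metis bar_poly_diff bar_poly_mult)
  then have "xm1 m dvd bar_poly m p - bar_poly m q"
    using xm1_dvd_bar_poly_xm1 by (metis dvd_mult2)
  then show ?thesis by (simp add: mod_eq_dvd_iff)
qed

lemma mult_pred_mod: "m > 0 \<Longrightarrow> ((m - 1) * i) mod m = (m - i mod m) mod (m::nat)"
proof -
  assume m: "m > 0"
  have "int ((m - 1) * i) = int m * int i + (- int i)" using m by (simp add: algebra_simps)
  then have lhs: "int (((m - 1) * i) mod m) = (- int i) mod int m"
    by (metis add.commute mod_mult_self2 zmod_int)
  have "int (m - i mod m) = int m + (- int (i mod m))"
    using m by (simp add: less_imp_le)
  then have "int ((m - i mod m) mod m) = (- int i) mod int m"
    using int_ops(9) mod_minus_eq by auto
  with lhs show ?thesis by simp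
qed

lemma bar_poly_bar_poly_mod:
  assumes m: "m > 0"
  shows "bar_poly m (bar_poly m p) mod xm1 m = (p :: 'a::field poly) mod xm1 m"
proof -
  have "bar_poly m (bar_poly m p) = pcompose p (pcompose (monom 1 (m - 1)) (monom 1 (m - 1)))"
    by (simp add: bar_poly_def pcompose_assoc)
  also have "pcompose (monom 1 (m - 1)) (monom 1 (m - 1)) = (monom 1 ((m - 1) * (m - 1)) :: 'a poly)"
    by (simp add: pcompose_monom_left monom_power)
  finally have compose: "bar_poly m (bar_poly m p) = pcompose p (monom 1 ((m - 1) * (m - 1)))" .
  have "((m - 1) * (m - 1)) mod m = 1 mod m"
    using mult_pred_mod[OF m, of "m - 1"] m by simp
  then have "monom 1 ((m - 1) * (m - 1)) mod xm1 m = (monom 1 1 :: 'a poly) mod xm1 m"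
    by (rule monom_mod_xm1_cong)
  then have "pcompose p (monom 1 ((m - 1) * (m - 1))) mod xm1 m = pcompose p (monom 1 1) mod xm1 m"
    by (rule pcompose_mod_cong)
  with compose show ?thesis by (simp add: monom_altdef)
qed

lemma monom_mult_bar_poly_monom_mod:
  assumes "m > 0"
  shows "(monom 1 k * bar_poly m (monom 1 k)) mod xm1 m = (1 :: 'a::field poly) mod xm1 m"
proof -
  have "monom 1 k * bar_poly m (monom 1 k) = (monom 1 (m * k) :: 'a poly)"
    using assms by (simp add: bar_poly_monom mult_monom algebra_simps)
  with xm1_dvd_monom_mult_minus_1[of m k] show ?thesis by (simp add: mod_eq_dvd_iff)
qed

lemma rbar_eq_bar_poly_mod:
  assumes m: "m > 0"
  shows "rbar m p = bar_poly m p mod xm1 m"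
  unfolding rbar_def rmod_def bar_poly_as_sum_monoms
proof (rule sum_mod_cong)
  fix i
  show "monom (coeff p i) ((m - i mod m) mod m) mod xm1 m
      = monom (coeff p i) ((m - 1) * i) mod xm1 m"
    by (rule monom_mod_xm1_cong) (use mult_pred_mod[OF m, of i] in simp)
qed

lemma monom_degree_mult_bar_poly_mod:
  "m > 0 \<Longrightarrow>
   (monom 1 (degree h) * bar_poly m h) mod xm1 m = reflect_poly h mod (xm1 m :: 'a::field poly)"
proof (induction h)
  case 0 then show ?case by (simp add: bar_poly_def)
next
  case (pCons c p)
  show ?case
  proof (cases "p = 0")
    case True then show ?thesis by (simp add: bar_poly_def monom_0)
  next
    case False
    let ?d = "degree p"
    have "monom 1 (Suc ?d) * bar_poly m (pCons c p)
        = monom 1 (Suc ?d) * [:c:] + (monom 1 (Suc ?d) * monom 1 (m - 1)) * bar_poly m p"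
      by (simp add: bar_poly_def pcompose_pCons distrib_left mult.assoc)
    also have "\<dots> = monom c (Suc ?d) + monom 1 m * (monom 1 ?d * bar_poly m p)"
      using pCons.prems by (simp add: smult_monom mult_monom add.commute mult.assoc)
    finally have "(monom 1 (Suc ?d) * bar_poly m (pCons c p)) mod xm1 m
        = monom c (Suc ?d) mod xm1 m + (monom 1 ?d * bar_poly m p) mod xm1 m"
      by (simp add: poly_mod_add_left monom_1_m_mult_mod_xm1)
    also have "\<dots> = monom c (Suc ?d) mod xm1 m + reflect_poly p mod xm1 m"
      using pCons.IH pCons.prems by simp
    also have "\<dots> = reflect_poly (pCons c p) mod xm1 m"
      by (subst reflect_poly_pCons'[OF False]) (simp add: poly_mod_add_left add.commute)
    finally show ?thesis using False by simp
  qed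
qed

lemma bar_poly_mod_eq_unit_mult_reflect:
  assumes m: "m > 0"
  shows "bar_poly m h mod xm1 m
       = (bar_poly m (monom 1 (degree h)) * reflect_poly h) mod xm1 m"
proof -
  let ?X = "monom 1 (degree h) :: 'a::field poly"
  have "(bar_poly m ?X * reflect_poly h) mod xm1 m = (bar_poly m ?X * (?X * bar_poly m h)) mod xm1 m"
    using monom_degree_mult_bar_poly_mod[OF m, of h] by (metis mod_mult_right_eq)
  also have "\<dots> = ((?X * bar_poly m ?X) * bar_poly m h) mod xm1 m" by (simp add: ac_simps)
  also have "\<dots> = (1 * bar_poly m h) mod xm1 m"
    using monom_mult_bar_poly_monom_mod[OF m] by (rule mod_mult_cong) simp
  finally show ?thesis by simp
qed

lemma bar_poly_reflect_mod_eq_unit_mult: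
  assumes m: "m > 0"
  shows "bar_poly m (reflect_poly h) mod xm1 m = (bar_poly m (monom 1 (degree h)) * h) mod xm1 m"
proof -
  let ?X = "monom 1 (degree h) :: 'a::field poly"
  have "bar_poly m (reflect_poly h) mod xm1 m = bar_poly m (?X * bar_poly m h) mod xm1 m"
    using bar_poly_mod_cong monom_degree_mult_bar_poly_mod[OF m, of h] by metis
  also have "\<dots> = (bar_poly m ?X * bar_poly m (bar_poly m h)) mod xm1 m"
    by (simp add: bar_poly_mult)
  also have "\<dots> = (bar_poly m ?X * h) mod xm1 m"
    using bar_poly_bar_poly_mod[OF m] by (rule mod_mult_cong[OF refl])
  finally show ?thesis .
qed

lemma dvd_bar_poly_iff_reflect_dvd:
  assumes m: "m > 0" and hN: "h dvd xm1 m"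
  shows "h dvd bar_poly m a \<longleftrightarrow> reflect_poly h dvd (a :: 'a::field poly)"
proof
  let ?U = "bar_poly m (monom 1 (degree h))"
  assume "h dvd bar_poly m a"
  then obtain t where "bar_poly m a = h * t" by blast
  then have "a mod xm1 m = (bar_poly m h * bar_poly m t) mod xm1 m"
    using bar_poly_bar_poly_mod[OF m, of a] by (simp add: bar_poly_mult)
  also have "\<dots> = (?U * reflect_poly h * bar_poly m t) mod xm1 m"
    using bar_poly_mod_eq_unit_mult_reflect[OF m] by (rule mod_mult_cong) simp
  finally have "a mod xm1 m = (reflect_poly h * (?U * bar_poly m t)) mod xm1 m"
    by (simp add: ac_simps)
  then show "reflect_poly h dvd a"
    using dvd_cong_mod[OF reflect_dvd_xm1[OF m hN]] by (metis dvd_triv_left)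
next
  let ?U = "bar_poly m (monom 1 (degree h))"
  assume "reflect_poly h dvd a"
  then obtain s where "a = reflect_poly h * s" by blast
  then have "bar_poly m a mod xm1 m = (bar_poly m (reflect_poly h) * bar_poly m s) mod xm1 m"
    by (simp add: bar_poly_mult)
  also have "\<dots> = (?U * h * bar_poly m s) mod xm1 m"
    using bar_poly_reflect_mod_eq_unit_mult[OF m] by (rule mod_mult_cong) simp
  finally have "bar_poly m a mod xm1 m = (h * (?U * bar_poly m s)) mod xm1 m"
    by (simp add: ac_simps)
  then show "h dvd bar_poly m a" using dvd_cong_mod[OF hN] by (metis dvd_triv_left)
qed

section \<open>The inner product as a constant coefficient\<close>

lemma coeff_sum_monoms_less: "coeff (\<Sum>i<m. monom (c i) i) n = (if n < m then c n else 0)"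
  by (simp add: coeff_sum)

lemma degree_less_if_coeff_eq_0:
  "m > 0 \<Longrightarrow> (\<And>n. n \<ge> m \<Longrightarrow> coeff p n = 0) \<Longrightarrow> degree p < m"
  using degree_le[of "m - 1" p] by fastforce

lemma degree_sum_monoms_less: "m > 0 \<Longrightarrow> degree (\<Sum>i<m. monom (c i) i) < m"
  by (rule degree_less_if_coeff_eq_0) (auto simp: coeff_sum_monoms_less)

lemma poly_eq_sum_monoms_less: "degree p < m \<Longrightarrow> p = (\<Sum>i<m. monom (coeff p i) i)"
  by (rule poly_eqI) (auto simp: coeff_sum_monoms_less coeff_eq_0)

lemma add_mult_pred_mod_eq_0_iff:
  fixes m j k :: nat
  assumes j: "j < m" and k: "k < m"
  shows "(k + (m - 1) * j) mod m = 0 \<longleftrightarrow> j = k"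
proof -
  obtain n where n: "m = Suc n" using j by (cases m) auto
  have eq: "int (k + (m - 1) * j) = (int k - int j) + int m * int j"
    using n by (simp add: algebra_simps)
  have "int ((k + (m - 1) * j) mod m) = (int k - int j) mod int m"
    unfolding of_nat_mod eq by simp
  moreover have "(int k - int j) mod int m = 0 \<longleftrightarrow> j = k"
  proof (cases "j \<le> k")
    case True
    then show ?thesis using j k by auto
  next
    case False
    have "(int k - int j) mod int m = (int k - int j + int m) mod int m" by simp
    also have "\<dots> = int k - int j + int m" using j k False by (intro mod_pos_pos_trivial) auto
    finally show ?thesis using False j k by auto
  qed
  ultimately show ?thesis by (metis of_nat_eq_0_iff)
qed

lemma coeff_0_monom_mult_bar_poly_mod:
  assumes m: "m > 0" and k: "k < m" and b: "degree b < m"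
  shows "coeff ((monom 1 k * bar_poly m b) mod xm1 m) 0 = coeff (b :: 'a::field poly) k"
proof -
  let ?s = "\<lambda>j. (k + (m - 1) * j) mod m"
  let ?Q = "(\<Sum>j<m. monom (coeff b j) (?s j)) :: 'a poly"
  have "bar_poly m b = bar_poly m (\<Sum>j<m. monom (coeff b j) j)"
    using poly_eq_sum_monoms_less[OF b] by simp
  also have "\<dots> = (\<Sum>j<m. monom (coeff b j) ((m - 1) * j))"
    by (simp only: bar_poly_sum bar_poly_monom)
  finally have "monom 1 k * bar_poly m b = (\<Sum>j<m. monom (coeff b j) (k + (m - 1) * j))"
    by (simp add: sum_distrib_left mult_monom)
  then have "(monom 1 k * bar_poly m b) mod xm1 m = ?Q mod xm1 m"
    by (simp only:) (rule sum_mod_cong, rule monom_mod_xm1)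
  also have "\<dots> = ?Q"
  proof (rule mod_xm1_eq_self, rule degree_less_if_coeff_eq_0[OF m])
    fix n assume "n \<ge> m"
    then have "?s j \<noteq> n" for j using mod_less_divisor[OF m] by (metis not_less)
    then show "coeff ?Q n = 0" by (simp add: coeff_sum)
  qed
  finally have "coeff ((monom 1 k * bar_poly m b) mod xm1 m) 0
      = (\<Sum>j<m. if ?s j = 0 then coeff b j else 0)"
    by (simp add: coeff_sum)
  also have "\<dots> = (\<Sum>j<m. if j = k then coeff b j else 0)"
    using add_mult_pred_mod_eq_0_iff[OF _ k] by (intro sum.cong) auto
  finally show ?thesis using k by simp
qed

lemma coeff_0_mult_bar_poly_mod:
  assumes m: "m > 0" and b: "degree b < m"
  shows "coeff ((p * bar_poly m b) mod xm1 m) 0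
       = (\<Sum>i<m. coeff (p mod xm1 m) i * coeff (b :: 'a::field poly) i)"
proof -
  define c where "c i = coeff (p mod xm1 m) i" for i
  have p: "p mod xm1 m = (\<Sum>i<m. smult (c i) (monom 1 i))"
    using poly_eq_sum_monoms_less[OF degree_mod_xm1_less[OF m, of p]] by (simp add: smult_monom c_def)
  have "(p * bar_poly m b) mod xm1 m = ((p mod xm1 m) * bar_poly m b) mod xm1 m"
    by (simp add: mod_mult_left_eq)
  also have "\<dots> = (\<Sum>i<m. smult (c i) ((monom 1 i * bar_poly m b) mod xm1 m))"
    unfolding p sum_distrib_right by (simp add: sum_mod_poly mod_smult_left)
  finally show ?thesis by (simp add: coeff_sum coeff_0_monom_mult_bar_poly_mod[OF m _ b] c_def)
qed

lemma xm1_dvd_if_coeff_0_mult_mod_eq_0: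
  assumes m: "m > 0" and zero: "\<And>r. coeff ((r * w) mod xm1 m) 0 = 0"
  shows "xm1 m dvd (w :: 'a::field poly)"
proof -
  have "coeff (w mod xm1 m) k = 0" for k
  proof (cases "k < m")
    case True
    have "coeff ((w * bar_poly m (monom 1 k)) mod xm1 m) 0
        = (\<Sum>i<m. coeff (w mod xm1 m) i * coeff (monom 1 k) i)"
      using True by (simp add: coeff_0_mult_bar_poly_mod[OF m] degree_monom_eq)
    also have "\<dots> = (\<Sum>i<m. if i = k then coeff (w mod xm1 m) i else 0)"
      by (rule sum.cong) auto
    finally have "coeff ((w * bar_poly m (monom 1 k)) mod xm1 m) 0 = coeff (w mod xm1 m) k"
      using True by simp
    then show ?thesis using zero[of "bar_poly m (monom 1 k)"] by (simp add: mult.commute)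
  next
    case False
    then show ?thesis using degree_mod_xm1_less[OF m, of w] by (simp add: coeff_eq_0)
  qed
  then show ?thesis by (simp add: dvd_eq_mod_eq_0 poly_eq_iff)
qed

section \<open>The code and its symplectic dual\<close>

lemma codeword_eq_codewordD:
  assumes "degree a < m" "degree b < m" "degree a' < m" "degree b' < m"
    and "codeword m a b = codeword m a' (b' :: 'a::zero poly)"
  shows "a = a'" and "b = b'"
proof -
  show "a = a'"
  proof (rule poly_eqI)
    fix n show "coeff a n = coeff a' n"
      using fun_cong[OF assms(5), of n] assms(1,3)
      by (cases "n < m") (simp_all add: codeword_def coeff_eq_0)
  qed
  show "b = b'"
  proof (rule poly_eqI)
    fix n show "coeff b n = coeff b' n"
      using fun_cong[OF assms(5), of "m + n"] assms(2,4)
      by (cases "n < m") (simp_all add: codeword_def coeff_eq_0)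
  qed
qed

lemma codeword_sum_monoms:
  "\<forall>i\<ge>2*m. v i = 0 \<Longrightarrow> v = codeword m (\<Sum>i<m. monom (v i) i) (\<Sum>i<m. monom (v (m + i)) i)"
  by (auto simp: codeword_def coeff_sum_monoms_less)

lemma symp_codeword:
  "symp m (codeword m u1 u2) (codeword m a b) =
     (\<Sum>i<m. coeff u1 i * coeff b i) - (\<Sum>i<m. coeff u2 i * coeff a i)"
  by (simp add: symp_def codeword_def sum_subtractf)

lemma codeword_mem_qc_code2_iff:
  assumes m: "m > 0" and g1N: "g1 dvd xm1 m" and g2N: "g2 dvd xm1 m"
    and a: "degree a < m" and b: "degree b < m"
  shows "codeword m a b \<in> qc_code2 m g1 (rmod m (v1 * g1)) 0 g2 \<longleftrightarrow>
         g1 dvd a \<and> g2 dvd b - v1 * (a :: 'a::field poly)"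
proof
  assume "codeword m a b \<in> qc_code2 m g1 (rmod m (v1 * g1)) 0 g2"
  then obtain r1 r2 where cw: "codeword m a b =
      codeword m (rmod m (r1 * g1 + r2 * 0)) (rmod m (r1 * rmod m (v1 * g1) + r2 * g2))"
    unfolding qc_code2_def by blast
  have "a = rmod m (r1 * g1 + r2 * 0)" and b_eq: "b = rmod m (r1 * rmod m (v1 * g1) + r2 * g2)"
    by (rule codeword_eq_codewordD[OF a b _ _ cw]; simp add: rmod_def degree_mod_xm1_less[OF m])+
  then have ea: "a mod xm1 m = (g1 * r1) mod xm1 m" by (simp add: rmod_def mult.commute)
  have "b mod xm1 m = (r1 * (v1 * g1) + r2 * g2) mod xm1 m"
    unfolding b_eq rmod_def by (metis mod_mod_trivial mod_add_left_eq mod_mult_right_eq)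
  then have eb: "b mod xm1 m = (v1 * (g1 * r1) + g2 * r2) mod xm1 m" by (simp add: ac_simps)
  have "(b - v1 * a) mod xm1 m = (g2 * r2) mod xm1 m"
    using mod_diff_cong[OF eb mod_mult_cong[OF refl ea, of v1]] by simp
  from dvd_cong_mod[OF g2N this] have "g2 dvd b - v1 * a" by simp
  moreover have "g1 dvd a" using dvd_cong_mod[OF g1N ea] by simp
  ultimately show "g1 dvd a \<and> g2 dvd b - v1 * a" by blast
next
  assume "g1 dvd a \<and> g2 dvd b - v1 * a"
  then obtain r1 r2 where r1: "a = g1 * r1" and r2: "b - v1 * a = g2 * r2" by blast
  have "rmod m (r1 * g1 + r2 * 0) = a"
    using mod_xm1_eq_self[OF a] r1 by (simp add: rmod_def mult.commute)
  moreover have "rmod m (r1 * rmod m (v1 * g1) + r2 * g2) = (r1 * (v1 * g1) + r2 * g2) mod xm1 m"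
    unfolding rmod_def by (metis mod_add_left_eq mod_mult_right_eq)
  moreover have "r1 * (v1 * g1) + r2 * g2 = b" using r1 r2 by (simp add: algebra_simps)
  ultimately show "codeword m a b \<in> qc_code2 m g1 (rmod m (v1 * g1)) 0 g2"
    unfolding qc_code2_def using mod_xm1_eq_self[OF b] by (metis (mono_tags, lifting) mem_Collect_eq)
qed

lemma symp_qc_code2_codeword:
  assumes m: "m > 0" and a: "degree a < m" and b: "degree b < m"
  shows "symp m (codeword m (rmod m (r1 * g1 + r2 * 0)) (rmod m (r1 * rmod m (v1 * g1) + r2 * g2)))
                (codeword m a b)
       = coeff ((r1 * (g1 * (bar_poly m b - v1 * bar_poly m a)) - r2 * (g2 * bar_poly m a)) mod xm1 m) 0"
proof -
  let ?u2 = "r1 * rmod m (v1 * g1) + r2 * g2"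
  have "symp m (codeword m (rmod m (r1 * g1 + r2 * 0)) (rmod m ?u2)) (codeword m a b)
      = coeff ((r1 * g1 * bar_poly m b - ?u2 * bar_poly m a) mod xm1 m) 0"
    unfolding symp_codeword using coeff_0_mult_bar_poly_mod[OF m b, of "r1 * g1"]
      coeff_0_mult_bar_poly_mod[OF m a, of ?u2]
    by (simp add: rmod_def poly_mod_diff_left)
  also have "(r1 * g1 * bar_poly m b - ?u2 * bar_poly m a) mod xm1 m
      = (r1 * (g1 * (bar_poly m b - v1 * bar_poly m a)) - r2 * (g2 * bar_poly m a)) mod xm1 m"
  proof -
    have "xm1 m dvd r1 * bar_poly m a * ((v1 * g1) mod xm1 m - v1 * g1)"
      by (simp add: mod_eq_dvd_iff[symmetric])
    moreover have "(r1 * g1 * bar_poly m b - ?u2 * bar_poly m a)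
        - (r1 * (g1 * (bar_poly m b - v1 * bar_poly m a)) - r2 * (g2 * bar_poly m a))
       = - (r1 * bar_poly m a * ((v1 * g1) mod xm1 m - v1 * g1))"
      by (simp add: rmod_def algebra_simps)
    ultimately show ?thesis by (simp add: mod_eq_dvd_iff)
  qed
  finally show ?thesis .
qed

lemma trace_forms_vanish_iff:
  assumes m: "m > 0"
  shows "(\<forall>r1 r2. coeff ((r1 * w1 - r2 * w2) mod xm1 m) 0 = 0) \<longleftrightarrow>
         xm1 m dvd w1 \<and> xm1 m dvd (w2 :: 'a::field poly)"
proof
  assume vanish: "\<forall>r1 r2. coeff ((r1 * w1 - r2 * w2) mod xm1 m) 0 = 0"
  have "xm1 m dvd w1"
  proof (rule xm1_dvd_if_coeff_0_mult_mod_eq_0[OF m])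
    fix r show "coeff ((r * w1) mod xm1 m) 0 = 0" using vanish[rule_format, of r 0] by simp
  qed
  moreover have "xm1 m dvd w2"
  proof (rule xm1_dvd_if_coeff_0_mult_mod_eq_0[OF m])
    fix r show "coeff ((r * w2) mod xm1 m) 0 = 0" using vanish[rule_format, of 0 "- r"] by simp
  qed
  ultimately show "xm1 m dvd w1 \<and> xm1 m dvd w2" ..
next
  assume "xm1 m dvd w1 \<and> xm1 m dvd w2"
  then show "\<forall>r1 r2. coeff ((r1 * w1 - r2 * w2) mod xm1 m) 0 = 0"
    by (auto simp: dvd_eq_mod_eq_0[symmetric])
qed

lemma codeword_mem_symp_dual_iff:
  assumes m: "m > 0" and g1h1: "g1 * h1 = xm1 m" and g2h2: "g2 * h2 = xm1 m"
    and a: "degree a < m" and b: "degree b < m"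
  shows "codeword m a b \<in> symp_dual m (qc_code2 m g1 (rmod m (v1 * g1)) 0 g2) \<longleftrightarrow>
         reflect_poly h2 dvd a \<and> reflect_poly h1 dvd b - bar_poly m v1 * (a :: 'a::field poly)"
proof -
  have g1: "g1 \<noteq> 0" and g2: "g2 \<noteq> 0" using g1h1 g2h2 xm1_nonzero[OF m] by auto
  let ?w1 = "g1 * (bar_poly m b - v1 * bar_poly m a)"
  let ?w2 = "g2 * bar_poly m a"
  have "codeword m a b \<in> symp_dual m (qc_code2 m g1 (rmod m (v1 * g1)) 0 g2)
      \<longleftrightarrow> (\<forall>r1 r2. coeff ((r1 * ?w1 - r2 * ?w2) mod xm1 m) 0 = 0)"
    by (auto simp: symp_dual_def qc_code2_def codeword_def symp_qc_code2_codeword[OF m a b, symmetric])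
  also have "\<dots> \<longleftrightarrow> xm1 m dvd ?w1 \<and> xm1 m dvd ?w2" by (rule trace_forms_vanish_iff[OF m])
  also have "xm1 m dvd ?w1 \<longleftrightarrow> h1 dvd bar_poly m b - v1 * bar_poly m a"
    using g1 by (simp flip: g1h1)
  also have "\<dots> \<longleftrightarrow> h1 dvd bar_poly m (b - bar_poly m v1 * a)"
  proof (rule dvd_cong_mod)
    show "h1 dvd xm1 m" by (simp flip: g1h1)
    have "(bar_poly m (bar_poly m v1) * bar_poly m a) mod xm1 m = (v1 * bar_poly m a) mod xm1 m"
      using bar_poly_bar_poly_mod[OF m] by (rule mod_mult_cong) simp
    then show "(bar_poly m b - v1 * bar_poly m a) mod xm1 m = bar_poly m (b - bar_poly m v1 * a) mod xm1 m"
      by (simp only: bar_poly_diff bar_poly_mult) (metis mod_diff_right_eq)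
  qed
  also have "\<dots> \<longleftrightarrow> reflect_poly h1 dvd b - bar_poly m v1 * a"
    by (rule dvd_bar_poly_iff_reflect_dvd[OF m]) (simp flip: g1h1)
  also have "xm1 m dvd ?w2 \<longleftrightarrow> h2 dvd bar_poly m a" using g2 by (simp flip: g2h2)
  also have "\<dots> \<longleftrightarrow> reflect_poly h2 dvd a"
    by (rule dvd_bar_poly_iff_reflect_dvd[OF m]) (simp flip: g2h2)
  finally show ?thesis by blast
qed

lemma symp_dual_containing_qc_code2_iff:
  assumes m: "m > 0" and g1h1: "g1 * h1 = xm1 m" and g2h2: "g2 * h2 = xm1 m"
  shows "symp_dual_containing m (qc_code2 m g1 (rmod m (v1 * g1)) 0 g2) \<longleftrightarrow>
    (\<forall>a b. degree a < m \<longrightarrow> degree b < m \<longrightarrow>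
       reflect_poly h2 dvd a \<longrightarrow> reflect_poly h1 dvd b - bar_poly m v1 * a \<longrightarrow>
       g1 dvd a \<and> g2 dvd b - v1 * (a :: 'a::field poly))"
proof -
  let ?D = "qc_code2 m g1 (rmod m (v1 * g1)) 0 g2"
  have g1N: "g1 dvd xm1 m" and g2N: "g2 dvd xm1 m"
    using g1h1 g2h2 by (metis dvd_triv_left)+
  note dual = codeword_mem_symp_dual_iff[OF m g1h1 g2h2]
  note code = codeword_mem_qc_code2_iff[OF m g1N g2N]
  have "symp_dual_containing m ?D \<longleftrightarrow>
      (\<forall>a b. degree a < m \<longrightarrow> degree b < m \<longrightarrow>
         codeword m a b \<in> symp_dual m ?D \<longrightarrow> codeword m a b \<in> ?D)"
  proof
    assume H: "\<forall>a b. degree a < m \<longrightarrow> degree b < m \<longrightarrow>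
        codeword m a b \<in> symp_dual m ?D \<longrightarrow> codeword m a b \<in> ?D"
    show "symp_dual_containing m ?D" unfolding symp_dual_containing_def
    proof
      fix v assume v: "v \<in> symp_dual m ?D"
      define a :: "'a poly" where "a = (\<Sum>i<m. monom (v i) i)"
      define b :: "'a poly" where "b = (\<Sum>i<m. monom (v (m + i)) i)"
      have "v = codeword m a b"
        unfolding a_def b_def using v by (intro codeword_sum_monoms) (simp add: symp_dual_def)
      moreover have "degree a < m" "degree b < m"
        unfolding a_def b_def by (simp_all add: degree_sum_monoms_less[OF m])
      ultimately show "v \<in> ?D" using H v by blast
    qed
  qed (auto simp: symp_dual_containing_def)
  also have "\<dots> \<longleftrightarrow> (\<forall>a b. degree a < m \<longrightarrow> degree b < m \<longrightarrow>
       reflect_poly h2 dvd a \<longrightarrow> reflect_poly h1 dvd b - bar_poly m v1 * a \<longrightarrow>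
       g1 dvd a \<and> g2 dvd b - v1 * a)"
    by (simp add: dual code imp_conjL)
  finally show ?thesis .
qed

text \<open>The two dual vectors [0 | h1^*] and [h2^* | bar v1 h2^*], reduced modulo x^m - 1.\<close>
lemma dual_containment_tests:
  assumes m: "m > 0" and g1h1: "g1 * h1 = xm1 m" and g2h2: "g2 * h2 = xm1 m"
    and contained: "\<forall>a b. degree a < m \<longrightarrow> degree b < m \<longrightarrow>
       reflect_poly h2 dvd a \<longrightarrow> reflect_poly h1 dvd b - bar_poly m v1 * a \<longrightarrow>
       g1 dvd a \<and> g2 dvd b - v1 * (a :: 'a::field poly)"
  shows "g2 dvd reflect_poly h2 * (bar_poly m v1 - v1)" and "g2 dvd reflect_poly h1"
proof -
  have g2N: "g2 dvd xm1 m" by (simp flip: g2h2)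
  have rh1N: "reflect_poly h1 dvd xm1 m" and rh2N: "reflect_poly h2 dvd xm1 m"
    using reflect_dvd_xm1[OF m] g1h1 g2h2 by (metis dvd_triv_right)+
  define b where "b = reflect_poly h1 mod xm1 m"
  have "reflect_poly h1 dvd b" unfolding b_def by (rule dvd_mod[OF dvd_refl rh1N])
  then have "g2 dvd b"
    using contained[rule_format, of 0 b] m degree_mod_xm1_less[OF m, of "reflect_poly h1"]
    by (simp add: b_def)
  then show "g2 dvd reflect_poly h1"
    using dvd_cong_mod[OF g2N, of b "reflect_poly h1"] by (simp add: b_def)
  define a where "a = reflect_poly h2 mod xm1 m"
  define b' where "b' = (bar_poly m v1 * a) mod xm1 m"
  have "reflect_poly h2 dvd a" unfolding a_def by (rule dvd_mod[OF dvd_refl rh2N])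
  moreover have "reflect_poly h1 dvd b' - bar_poly m v1 * a"
    using rh1N by (rule dvd_trans) (simp add: b'_def mod_eq_dvd_iff[symmetric])
  ultimately have "g2 dvd b' - v1 * a"
    using contained[rule_format, of a b'] unfolding a_def b'_def
    by (simp add: degree_mod_xm1_less[OF m])
  moreover have "(b' - v1 * a) mod xm1 m = (reflect_poly h2 * (bar_poly m v1 - v1)) mod xm1 m"
  proof -
    have "(b' - v1 * a) mod xm1 m = ((bar_poly m v1 - v1) * a) mod xm1 m"
      unfolding b'_def by (simp add: mod_diff_left_eq left_diff_distrib)
    also have "\<dots> = (reflect_poly h2 * (bar_poly m v1 - v1)) mod xm1 m"
      unfolding a_def by (simp add: mod_mult_right_eq mult.commute)
    finally show ?thesis .
  qed
  ultimately show "g2 dvd reflect_poly h2 * (bar_poly m v1 - v1)"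
    by (metis dvd_cong_mod[OF g2N])
qed

lemma dvd_reflect_cofactor_swap:
  assumes m: "m > 0" and g1h1: "g1 * h1 = xm1 m" and g2h2: "g2 * h2 = (xm1 m :: 'a::field poly)"
    and h1: "coeff h1 0 \<noteq> 0" and "g2 dvd reflect_poly h1"
  shows "g1 dvd reflect_poly h2"
proof -
  obtain k where "reflect_poly h1 = g2 * k" using assms(5) by blast
  then have "h1 = reflect_poly g2 * reflect_poly k"
    using h1 by (metis reflect_poly_mult reflect_poly_reflect_poly)
  then have "reflect_poly g2 * reflect_poly h2 = reflect_poly g2 * (- (g1 * reflect_poly k))"
    using g1h1 reflect_poly_mult[of g2 h2] by (simp add: g2h2 reflect_xm1[OF m] algebra_simps)
  moreover have "reflect_poly g2 \<noteq> 0" using g2h2 xm1_nonzero[OF m] by auto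
  ultimately have "reflect_poly h2 = - (g1 * reflect_poly k)" by (metis mult_left_cancel)
  then show ?thesis by simp
qed

lemma dual_containment_if_dvd:
  assumes m: "m > 0" and g1h1: "g1 * h1 = xm1 m" and g2h2: "g2 * h2 = xm1 m"
    and h1: "coeff h1 0 \<noteq> 0"
    and dvd_h2: "g2 dvd reflect_poly h2 * (bar_poly m v1 - v1)" and dvd_h1: "g2 dvd reflect_poly h1"
    and a: "reflect_poly h2 dvd a" and b: "reflect_poly h1 dvd b - bar_poly m v1 * a"
  shows "g1 dvd a \<and> g2 dvd b - v1 * (a :: 'a::field poly)"
proof
  obtain s where s: "a = reflect_poly h2 * s" using a by blast
  show "g1 dvd a" using dvd_reflect_cofactor_swap[OF m g1h1 g2h2 h1 dvd_h1] s by simp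
  have "b - v1 * a = (b - bar_poly m v1 * a) + reflect_poly h2 * (bar_poly m v1 - v1) * s"
    using s by (simp add: algebra_simps)
  moreover have "g2 dvd b - bar_poly m v1 * a" using dvd_h1 b by (rule dvd_trans)
  ultimately show "g2 dvd b - v1 * a" using dvd_h2 by (metis dvd_add dvd_mult2)
qed

lemma coeff_0_cofactor_xm1_nonzero:
  assumes "m > 0" and "g * h = xm1 m"
  shows "coeff h 0 \<noteq> (0 :: 'a::field)"
proof -
  have "coeff g 0 * coeff h 0 = -1"
    using coeff_0_xm1[OF assms(1), where 'a='a] by (simp flip: assms(2) add: coeff_mult_0)
  then show ?thesis by auto
qed

lemma rperp_eq_smult_reflect_cofactor:
  assumes "lead_coeff g = 1" and "g dvd xm1 m"
  shows "rperp m g =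
    smult (inverse (coeff (xm1 m div g) 0)) (reflect_poly (xm1 m div g :: 'a::field_gcd poly))"
proof -
  have "normalize g = g" using assms(1) by (simp add: normalize_poly_eq_map_poly)
  then have "gcd g (xm1 m) = g" using gcd_proj1_if_dvd[OF assms(2)] by simp
  then show ?thesis by (simp add: rperp_def Let_def)
qed

lemma dvd_rmod_rperp_mult_iff:
  assumes m: "m > 0" and lc: "lead_coeff g = 1" and gN: "g dvd xm1 m" and dN: "d dvd xm1 m"
    and pq: "p mod xm1 m = q mod xm1 m"
  shows "d dvd rmod m (rperp m g * p) \<longleftrightarrow>
         d dvd reflect_poly (xm1 m div g) * (q :: 'a::field_gcd poly)"
proof -
  let ?h = "xm1 m div g"
  have "coeff ?h 0 \<noteq> 0" by (rule coeff_0_cofactor_xm1_nonzero[OF m, of g]) (simp add: gN)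
  have "d dvd rmod m (rperp m g * p) \<longleftrightarrow> d dvd rperp m g * p"
    unfolding rmod_def by (rule dvd_cong_mod[OF dN]) simp
  also have "\<dots> \<longleftrightarrow> d dvd reflect_poly ?h * p"
    using \<open>coeff ?h 0 \<noteq> 0\<close> by (simp add: rperp_eq_smult_reflect_cofactor[OF lc gN] dvd_smult_iff)
  also have "\<dots> \<longleftrightarrow> d dvd reflect_poly ?h * q"
    using dN by (rule dvd_cong_mod) (use pq in \<open>metis mod_mult_right_eq\<close>)
  finally show ?thesis .
qed

theorem mainTheorem9:
  fixes g1 g2 v1 :: "'a::{finite,field_gcd} poly" and m :: nat
  assumes "m > 0"
    and "lead_coeff g1 = 1" and "lead_coeff g2 = 1"
    and "g1 dvd xm1 m" and "g2 dvd xm1 m"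
    and "degree v1 < m"
  shows "symp_dual_containing m (qc_code2 m g1 (rmod m (v1 * g1)) 0 g2) \<longleftrightarrow>
         (g2 dvd rmod m (rperp m g2 * (rbar m v1 - v1)) \<and> g2 dvd rmod m (rperp m g1))"
proof -
  note m = assms(1)
  define h1 where "h1 = xm1 m div g1"
  define h2 where "h2 = xm1 m div g2"
  have g1h1: "g1 * h1 = xm1 m" and g2h2: "g2 * h2 = xm1 m"
    using assms(4,5) by (simp_all add: h1_def h2_def)
  have h1: "coeff h1 0 \<noteq> 0" by (rule coeff_0_cofactor_xm1_nonzero[OF m g1h1])
  have "symp_dual_containing m (qc_code2 m g1 (rmod m (v1 * g1)) 0 g2) \<longleftrightarrow>
      g2 dvd reflect_poly h2 * (bar_poly m v1 - v1) \<and> g2 dvd reflect_poly h1"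
    unfolding symp_dual_containing_qc_code2_iff[OF m g1h1 g2h2]
    using dual_containment_tests[OF m g1h1 g2h2] dual_containment_if_dvd[OF m g1h1 g2h2 h1]
    by blast
  moreover have "g2 dvd rmod m (rperp m g2 * (rbar m v1 - v1)) \<longleftrightarrow>
      g2 dvd reflect_poly h2 * (bar_poly m v1 - v1)"
    unfolding h2_def by (rule dvd_rmod_rperp_mult_iff[OF m assms(3,5,5)])
      (simp add: rbar_eq_bar_poly_mod[OF m] mod_diff_left_eq)
  moreover have "g2 dvd rmod m (rperp m g1) \<longleftrightarrow> g2 dvd reflect_poly h1"
    using dvd_rmod_rperp_mult_iff[OF m assms(2,4,5), of 1 1] by (simp add: h1_def)
  ultimately show ?thesis by blast
qed

end
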